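(* For every $\mathrm{PastCTL}_\pm$ formula $\varphi$ over a set $AP$ of atomic propositions there is a two-way linear $\mathrm{HTA}_\pm$ $\mathcal{A}_\varphi$ over $\Sigma=2^{AP}$ such that $\mathcal{L}(\varphi)=\mathcal{L}(\mathcal{A}_\varphi)$.
   Context: Fix a finite set $AP$, $\Sigma=2^{AP}$. A $\Sigma$-tree is an unranked (finitely many children per node), unordered, leafless (every node has a child) tree with labelling $t(v)\in\Sigma$. $\mathrm{PastCTL}_\pm$ formulae: $\varphi ::= p\mid\neg\varphi\mid\varphi\lor\varphi\mid\mathsf{D}^n\varphi\mid\mathsf{E}\mathsf{X}\varphi\mid\mathsf{E}(\varphi\,\mathsf{U}\,\varphi)\mid\mathsf{E}\mathsf{Y}\varphi\mid\mathsf{E}(\varphi\,\mathsf{S}\,\varphi)$, evaluated at a node $u$: $p$ iff $p\in t(u)$; Booleans as usual; $\mathsf{D}^n\varphi$ iff $u$ has at least $n$ distinct children satisfying $\varphi$; $\mathsf{E}\mathsf{X}\varphi$ iff some child of $u$ satisfies $\varphi$; $\mathsf{E}(\varphi_1\mathsf{U}\varphi_2)$ iff there is a downward path $u=v_0,\dots,v_j$ with $v_j\models\varphi_2$ and $v_k\models\varphi_1$ for $k<j$; $\mathsf{E}\mathsf{Y}\varphi$ iff $u$ is not the root and its parent satisfies $\varphi$; $\mathsf{E}(\varphi_1\mathsf{S}\varphi_2)$ iff for some $j\ge0$ the ancestors $w_0=u$, $w_{k+1}=$ parent of $w_k$ exist up to $w_j$, $w_j\models\varphi_2$ and $w_k\models\varphi_1$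 for $k<j$. $\mathcal{L}(\varphi)$ is the set of trees whose root satisfies $\varphi$. A two-way $\mathrm{HTA}_\pm$ is $\mathcal{A}=\langle Q,\Sigma,\delta,q_I,F\rangle$ with $Q$ finite, $q_I\in Q$, $F\subseteq Q$, $\delta:Q\times\Sigma\times\{\mathit{root},\mathit{nonroot}\}\to\mathcal{B}^+(\{\Diamond_k,\Box_k\}_{k\in\mathbb{N}}\times Q\cup\{\Uparrow\}\times Q)$ (positive Boolean formulae over these atoms, built with $\top,\bot,\land,\lor$); $\Diamond=\Diamond_1,\Box=\Box_1$. A run on $t$ from $s$ is a tree $r$ labelled by $Q\times\mathrm{Dom}(t)$, root labelled $(q_I,s)$, each node $x$ labelled $(q,v)$ satisfying $\delta(q,t(v),\rho)$ ($\rho=\mathit{root}$ iff $v$ is the root), where $x\models(\Diamond_k,q')$ iff $x$ has children labelled $(q',v_1),\dots,(q',v_k)$ for pairwise distinct children $v_i$ of $v$; $x\models(\Box_k,q')$ iff for all but at most $k-1$ children $v'$ of $v$, $x$ has a child labelled $(q',v')$; $x\models(\Uparrow,q')$ iff $x$ has a child labelled $(q',v')$ with $v'$ the parent of $v$. Accepting: every infinite path of $r$ from its root has infinitely many nodes with state in $F$. $\mathcal{L}(\mathcal{A})$: trees with an accepting run from the root. Hesitant: a partition of $Q$ into nonempty components, totally ordered so that transitions from $Q_i$ only mention states of components $Q_j$ with $j\le i$, each component being of exactly one type: transient (no atom with state in $Q_i$ occurs in $\delta(q,\sigma,\rho)$ for $q\in Q_i$); existential ($Q_i$-atoms in such transitions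 are of form $(\Diamond,q')$, at most one per DNF clause); universal ($Q_i$-atoms of form $(\Box,q')$, at most one per CNF clause); upward (singleton $\{q\}$ with $q$ occurring in $\delta(q,\sigma,\rho)$ only as $(\Uparrow,q)$). Polarised: existential-component states not in $F$, universal-component states in $F$. Linear: all components are singletons. *)

theory Defs
  imports Main
begin

text \<open>Nodes are lists of naturals; the children of node v are the nodes i # v with
  i < br t v; the root is []; the parent of i # v is v. Labels are sets of atomic
  propositions (Sigma = 2^AP, AP = the finite type 'ap).\<close>

record 'ap tree =
  br  :: "nat list \<Rightarrow> nat"
  lab :: "nat list \<Rightarrow> 'ap set"

fun in_dom :: "'ap tree \<Rightarrow> nat list \<Rightarrow> bool" where
  "in_dom t [] = True"
| "in_dom t (i # v) = (in_dom t v \<and> i < br t v)"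

definition children :: "'ap tree \<Rightarrow> nat list \<Rightarrow> nat list set" where
  "children t v = {i # v | i. i < br t v}"

definition is_tree :: "'ap tree \<Rightarrow> bool" where
  "is_tree t \<longleftrightarrow> (\<forall>v. in_dom t v \<longrightarrow> br t v \<ge> 1)"

datatype 'ap pctl =
    Atom 'ap
  | Neg "'ap pctl"
  | Or "'ap pctl" "'ap pctl"
  | Dn nat "'ap pctl"
  | EXn "'ap pctl"
  | EUn "'ap pctl" "'ap pctl"
  | EYn "'ap pctl"
  | ESn "'ap pctl" "'ap pctl"

fun sat :: "'ap tree \<Rightarrow> nat list \<Rightarrow> 'ap pctl \<Rightarrow> bool" where
  "sat t u (Atom p) = (p \<in> lab t u)"
| "sat t u (Neg \<phi>) = (\<not> sat t u \<phi>)"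
| "sat t u (Or \<phi> \<psi>) = (sat t u \<phi> \<or> sat t u \<psi>)"
| "sat t u (Dn n \<phi>) = (card {c \<in> children t u. sat t c \<phi>} \<ge> n)"
| "sat t u (EXn \<phi>) = (\<exists>c \<in> children t u. sat t c \<phi>)"
| "sat t u (EUn \<phi> \<psi>) =
     (\<exists>(j::nat) (f::nat \<Rightarrow> nat list). f 0 = u \<and> (\<forall>k<j. f (Suc k) \<in> children t (f k))
        \<and> sat t (f j) \<psi> \<and> (\<forall>k<j. sat t (f k) \<phi>))"
| "sat t u (EYn \<phi>) = (u \<noteq> [] \<and> sat t (tl u) \<phi>)"
| "sat t u (ESn \<phi> \<psi>) =
     (\<exists>j \<le> length u. sat t (drop j u) \<psi> \<and> (\<forall>k<j. sat t (drop k u) \<phi>))"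

definition ctl_lang :: "'ap pctl \<Rightarrow> 'ap tree set" where
  "ctl_lang \<phi> = {t. is_tree t \<and> sat t [] \<phi>}"

datatype 'a pbf = PTrue | PFalse | PAtom 'a | PAnd "'a pbf" "'a pbf" | POr "'a pbf" "'a pbf"

fun eval_pbf :: "('a \<Rightarrow> bool) \<Rightarrow> 'a pbf \<Rightarrow> bool" where
  "eval_pbf I PTrue = True"
| "eval_pbf I PFalse = False"
| "eval_pbf I (PAtom a) = I a"
| "eval_pbf I (PAnd a b) = (eval_pbf I a \<and> eval_pbf I b)"
| "eval_pbf I (POr a b) = (eval_pbf I a \<or> eval_pbf I b)"

fun atoms :: "'a pbf \<Rightarrow> 'a set" where
  "atoms PTrue = {}"
| "atoms PFalse = {}"
| "atoms (PAtom a) = {a}"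
| "atoms (PAnd a b) = atoms a \<union> atoms b"
| "atoms (POr a b) = atoms a \<union> atoms b"

fun dnf :: "'a pbf \<Rightarrow> 'a list list" where
  "dnf PTrue = [[]]"
| "dnf PFalse = []"
| "dnf (PAtom a) = [[a]]"
| "dnf (POr a b) = dnf a @ dnf b"
| "dnf (PAnd a b) = [c1 @ c2. c1 \<leftarrow> dnf a, c2 \<leftarrow> dnf b]"

fun cnf :: "'a pbf \<Rightarrow> 'a list list" where
  "cnf PTrue = []"
| "cnf PFalse = [[]]"
| "cnf (PAtom a) = [[a]]"
| "cnf (PAnd a b) = cnf a @ cnf b"
| "cnf (POr a b) = [c1 @ c2. c1 \<leftarrow> cnf a, c2 \<leftarrow> cnf b]"

datatype 'q atom = Dia nat 'q | Box nat 'q | Up 'q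

fun atom_state :: "'q atom \<Rightarrow> 'q" where
  "atom_state (Dia k q) = q"
| "atom_state (Box k q) = q"
| "atom_state (Up q) = q"

text \<open>States are natural numbers; the state set is the finite set states.
  The Boolean argument of delta is True iff the node is the root.\<close>
record 'ap hta =
  states :: "nat set"
  delta  :: "nat \<Rightarrow> 'ap set \<Rightarrow> bool \<Rightarrow> nat atom pbf"
  init   :: nat
  acc    :: "nat set"

definition hta_wf :: "'ap hta \<Rightarrow> bool" where
  "hta_wf A \<longleftrightarrow> finite (states A) \<and> init A \<in> states A \<and> acc A \<subseteq> states A"

text \<open>Run trees: node set R of nat lists, closed under taking the parent (tl),
  containing the root []; labelling rl x = (state, tree node).\<close>
definition rchildren :: "nat list set \<Rightarrow> nat list \<Rightarrow> nat list set" where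
  "rchildren R x = {y \<in> R. \<exists>i. y = i # x}"

fun atom_holds :: "'ap tree \<Rightarrow> nat list set \<Rightarrow> (nat list \<Rightarrow> nat \<times> nat list)
    \<Rightarrow> nat list \<Rightarrow> nat atom \<Rightarrow> bool" where
  "atom_holds t R rl x (Dia k q') =
     (\<exists>S \<subseteq> children t (snd (rl x)). card S = k \<and>
        (\<forall>v' \<in> S. \<exists>y \<in> rchildren R x. rl y = (q', v')))"
| "atom_holds t R rl x (Box k q') =
     (card {v' \<in> children t (snd (rl x)). \<not> (\<exists>y \<in> rchildren R x. rl y = (q', v'))} < k)"
| "atom_holds t R rl x (Up q') =
     (snd (rl x) \<noteq> [] \<and> (\<exists>y \<in> rchildren R x. rl y = (q', tl (snd (rl x)))))"

definition is_run :: "'ap hta \<Rightarrow> 'ap tree \<Rightarrow> nat list \<Rightarrow> nat list set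
    \<Rightarrow> (nat list \<Rightarrow> nat \<times> nat list) \<Rightarrow> bool" where
  "is_run A t s R rl \<longleftrightarrow>
     [] \<in> R \<and> (\<forall>i x. i # x \<in> R \<longrightarrow> x \<in> R) \<and> rl [] = (init A, s) \<and>
     (\<forall>x \<in> R. fst (rl x) \<in> states A \<and> in_dom t (snd (rl x)) \<and>
        eval_pbf (atom_holds t R rl x)
          (delta A (fst (rl x)) (lab t (snd (rl x))) (snd (rl x) = [])))"

definition accepting :: "'ap hta \<Rightarrow> nat list set \<Rightarrow> (nat list \<Rightarrow> nat \<times> nat list) \<Rightarrow> bool" where
  "accepting A R rl \<longleftrightarrow>
     (\<forall>p::nat \<Rightarrow> nat list. p 0 = [] \<and> (\<forall>n. p (Suc n) \<in> rchildren R (p n)) \<longrightarrow>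
        (\<exists>\<^sub>\<infinity>n. fst (rl (p n)) \<in> acc A))"

definition hta_lang :: "'ap hta \<Rightarrow> 'ap tree set" where
  "hta_lang A = {t. is_tree t \<and> (\<exists>R rl. is_run A t [] R rl \<and> accepting A R rl)}"

datatype ctype = Transient | Existential | Universal | Upward

definition hesitant_wrt :: "'ap hta \<Rightarrow> nat set list \<Rightarrow> ctype list \<Rightarrow> bool" where
  "hesitant_wrt A comps tys \<longleftrightarrow>
     length tys = length comps \<and>
     (\<forall>C \<in> set comps. C \<noteq> {}) \<and>
     \<Union> (set comps) = states A \<and>
     (\<forall>i < length comps. \<forall>j < length comps. i \<noteq> j \<longrightarrow> comps ! i \<inter> comps ! j = {}) \<and>
     (\<forall>i < length comps. \<forall>q \<in> comps ! i. \<forall>\<sigma> \<rho>.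
        let \<phi> = delta A q \<sigma> \<rho>; inC = (\<lambda>a. atom_state a \<in> comps ! i) in
        (\<forall>a \<in> atoms \<phi>. \<exists>j \<le> i. atom_state a \<in> comps ! j) \<and>
        (case tys ! i of
           Transient \<Rightarrow> (\<forall>a \<in> atoms \<phi>. \<not> inC a)
         | Existential \<Rightarrow> (\<forall>a \<in> atoms \<phi>. inC a \<longrightarrow> (\<exists>q'. a = Dia 1 q')) \<and>
                          (\<forall>cl \<in> set (dnf \<phi>). card {a \<in> set cl. inC a} \<le> 1)
         | Universal \<Rightarrow> (\<forall>a \<in> atoms \<phi>. inC a \<longrightarrow> (\<exists>q'. a = Box 1 q')) \<and>
                          (\<forall>cl \<in> set (cnf \<phi>). card {a \<in> set cl. inC a} \<le> 1)
         | Upward \<Rightarrow> comps ! i = {q} \<and> (\<forall>a \<in> atoms \<phi>. inC a \<longrightarrow> a = Up q)))"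

definition linear_hesitant :: "'ap hta \<Rightarrow> bool" where
  "linear_hesitant A \<longleftrightarrow>
     (\<exists>comps tys. hesitant_wrt A comps tys \<and> (\<forall>C \<in> set comps. \<exists>q. C = {q}))"

end

theory Submission
  imports Defs "HOL-Library.Countable" "HOL-Library.Infinite_Set"
begin

text \<open>Every subformula \<psi> of \<phi> gives two states, one asserting \<psi> and one asserting its
  negation, and the transition of a state is the one-step unfolding of the semantics of its
  formula, EU and ES being unfolded by their fixpoint equations. The only atoms that return to
  the same state come from EU, which loops existentially downwards when asserted and universally
  downwards when negated, and from ES, which loops upwards; every other atom leads to a smaller
  formula. Listing the states by formula size therefore makes the automaton linear hesitant.
  The negated EU states are the accepting ones, as they are greatest fixpoints.

  In an accepting run every copy is right about its formula, by induction on its size: a copy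
  that is wrong has a child copy in the same state that is wrong as well, which acceptance rules
  out for non-accepting states, while a wrong negated EU state is refuted along a witness path.
  Conversely, a model is accepted by the run that sends a copy to every true obligation about a
  smaller formula at a neighbouring node, and keeps an asserted EU only along a path of strictly
  decreasing distance to a witness.\<close>

lemma eval_pbf_mono:
  "eval_pbf I f \<Longrightarrow> (\<And>a. a \<in> atoms f \<Longrightarrow> I a \<Longrightarrow> J a) \<Longrightarrow> eval_pbf J f"
  by (induction f) auto

lemma dnf_clause_subset_atoms: "cl \<in> set (dnf f) \<Longrightarrow> set cl \<subseteq> atoms f"
  by (induction f arbitrary: cl) fastforce+

lemma cnf_clause_subset_atoms: "cl \<in> set (cnf f) \<Longrightarrow> set cl \<subseteq> atoms f"
  by (induction f arbitrary: cl) fastforce+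

fun loop_atoms :: "ctype \<Rightarrow> 'q \<Rightarrow> 'q atom set" where
  "loop_atoms Transient q = {}"
| "loop_atoms Existential q = {Dia 1 q}"
| "loop_atoms Universal q = {Box 1 q}"
| "loop_atoms Upward q = {Up q}"

lemma finite_loop_atoms: "finite (loop_atoms ty q)"
  by (cases ty) auto

lemma card_loop_atoms_le_1: "card (loop_atoms ty q) \<le> 1"
  by (cases ty) auto

lemma atom_state_loop_atoms: "a \<in> loop_atoms ty q \<Longrightarrow> atom_state a = q"
  by (cases ty) auto

lemma loop_atoms_type_condition:
  assumes "C = {q}" and "\<And>a. a \<in> atoms \<phi> \<Longrightarrow> atom_state a \<in> C \<Longrightarrow> a \<in> loop_atoms ty q"
  shows "case ty of
      Transient \<Rightarrow> \<forall>a\<in>atoms \<phi>. atom_state a \<notin> C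
    | Existential \<Rightarrow> (\<forall>a\<in>atoms \<phi>. atom_state a \<in> C \<longrightarrow> (\<exists>q'. a = Dia 1 q')) \<and>
        (\<forall>cl\<in>set (dnf \<phi>). card {a \<in> set cl. atom_state a \<in> C} \<le> 1)
    | Universal \<Rightarrow> (\<forall>a\<in>atoms \<phi>. atom_state a \<in> C \<longrightarrow> (\<exists>q'. a = Box 1 q')) \<and>
        (\<forall>cl\<in>set (cnf \<phi>). card {a \<in> set cl. atom_state a \<in> C} \<le> 1)
    | Upward \<Rightarrow> C = {q} \<and> (\<forall>a\<in>atoms \<phi>. atom_state a \<in> C \<longrightarrow> a = Up q)"
proof -
  have "card {a \<in> set cl. atom_state a \<in> C} \<le> 1"
    if "cl \<in> set (dnf \<phi>) \<or> cl \<in> set (cnf \<phi>)" for cl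
  proof -
    have "{a \<in> set cl. atom_state a \<in> C} \<subseteq> loop_atoms ty q"
      using assms(2) that dnf_clause_subset_atoms cnf_clause_subset_atoms by blast
    then have "card {a \<in> set cl. atom_state a \<in> C} \<le> card (loop_atoms ty q)"
      by (simp add: card_mono finite_loop_atoms)
    then show ?thesis
      using card_loop_atoms_le_1[of ty q] by linarith
  qed
  then show ?thesis
    using assms by (cases ty) auto
qed

text \<open>The components are the singletons of states, listed by increasing rank.\<close>
lemma linear_hesitant_if_ranked:
  fixes A :: "'ap hta" and rank :: "nat \<Rightarrow> nat" and ty :: "nat \<Rightarrow> ctype"
  assumes fin: "finite (states A)"
    and ranked: "\<And>q \<sigma> \<rho> a. q \<in> states A \<Longrightarrow> a \<in> atoms (delta A q \<sigma> \<rho>) \<Longrightarrow>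
      atom_state a \<in> states A \<and> (a \<in> loop_atoms (ty q) q \<or> rank (atom_state a) < rank q)"
  shows "linear_hesitant A"
proof -
  define L where "L = sort_key rank (sorted_list_of_set (states A))"
  have set_L: "set L = states A" and distinct_L: "distinct L" and sorted_L: "sorted (map rank L)"
    using fin by (auto simp: L_def)
  have ranked_L: "atom_state a \<in> set L \<and> (a \<in> loop_atoms (ty (L ! i)) (L ! i) \<or>
      rank (atom_state a) < rank (L ! i))"
    if "i < length L" "a \<in> atoms (delta A (L ! i) \<sigma> \<rho>)" for i \<sigma> \<rho> a
    using ranked[OF _ that(2)] nth_mem[OF that(1)] set_L by auto
  have self: "a \<in> loop_atoms (ty (L ! i)) (L ! i)"
    if "i < length L" "a \<in> atoms (delta A (L ! i) \<sigma> \<rho>)" "atom_state a = L ! i" for i \<sigma> \<rho> a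
    using ranked_L[OF that(1,2)] that(3) by auto
  have lower: "\<exists>j \<le> i. atom_state a \<in> map (\<lambda>q. {q}) L ! j"
    if i: "i < length L" and a: "a \<in> atoms (delta A (L ! i) \<sigma> \<rho>)" for i \<sigma> \<rho> a
  proof -
    obtain j where j: "j < length L" "atom_state a = L ! j"
      using ranked_L[OF i a] by (metis in_set_conv_nth)
    have "j \<le> i"
    proof (cases "a \<in> loop_atoms (ty (L ! i)) (L ! i)")
      case True
      then show ?thesis
        using j i distinct_L atom_state_loop_atoms by (metis nth_eq_iff_index_eq order_refl)
    next
      case False
      then show ?thesis
        using ranked_L[OF i a] j sorted_nth_mono[OF sorted_L, of i j] i by fastforce
    qed
    then show ?thesis
      using j by auto
  qed
  have "hesitant_wrt A (map (\<lambda>q. {q}) L) (map ty L)"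
    unfolding hesitant_wrt_def Let_def
    using set_L distinct_L lower ranked_L self
    by (intro conjI allI ballI impI loop_atoms_type_condition) (auto simp: nth_eq_iff_index_eq)
  then show ?thesis
    unfolding linear_hesitant_def by fastforce
qed

lemma finite_children [simp]: "finite (children t v)"
  unfolding children_def by (rule finite_subset[of _ "(\<lambda>i. i # v) ` {..<br t v}"]) auto

lemma in_dom_children: "in_dom t v \<Longrightarrow> v' \<in> children t v \<Longrightarrow> in_dom t v'"
  by (auto simp: children_def)

lemma in_dom_tl: "in_dom t v \<Longrightarrow> in_dom t (tl v)"
  by (cases v) auto

lemma ex_subset_card_iff:
  "finite A \<Longrightarrow> (\<exists>S \<subseteq> A. card S = k \<and> (\<forall>x\<in>S. P x)) \<longleftrightarrow> k \<le> card {x \<in> A. P x}"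
proof
  assume "finite A" "\<exists>S \<subseteq> A. card S = k \<and> (\<forall>x\<in>S. P x)"
  then obtain S where "S \<subseteq> {x \<in> A. P x}" "card S = k" by blast
  then show "k \<le> card {x \<in> A. P x}" using \<open>finite A\<close> card_mono[of "{x \<in> A. P x}" S] by simp
next
  assume "k \<le> card {x \<in> A. P x}"
  then obtain S where "S \<subseteq> {x \<in> A. P x}" "card S = k" by (meson obtain_subset_with_card_n)
  then show "\<exists>S \<subseteq> A. card S = k \<and> (\<forall>x\<in>S. P x)" by blast
qed

text \<open>Meaning of an atom at node v of t when P q v' says that a copy of the automaton in
  state q is sent to node v'.\<close>
fun atom_sat :: "(nat \<Rightarrow> nat list \<Rightarrow> bool) \<Rightarrow> 'ap tree \<Rightarrow> nat list \<Rightarrow> nat atom \<Rightarrow> bool" where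
  "atom_sat P t v (Dia k q) = (k \<le> card {v' \<in> children t v. P q v'})"
| "atom_sat P t v (Box k q) = (card {v' \<in> children t v. \<not> P q v'} < k)"
| "atom_sat P t v (Up q) = (v \<noteq> [] \<and> P q (tl v))"

fun atom_targets :: "'ap tree \<Rightarrow> nat list \<Rightarrow> 'q atom \<Rightarrow> nat list set" where
  "atom_targets t v (Dia k q) = children t v"
| "atom_targets t v (Box k q) = children t v"
| "atom_targets t v (Up q) = (if v = [] then {} else {tl v})"

lemma atom_targets_subset: "atom_targets t v a \<subseteq> insert (tl v) (children t v)"
  by (cases a) auto

lemma atom_holds_eq_atom_sat:
  "atom_holds t R rl x = atom_sat (\<lambda>q v'. \<exists>y \<in> rchildren R x. rl y = (q, v')) t (snd (rl x))"
proof
  fix a show "atom_holds t R rl x a = atom_sat (\<lambda>q v'. \<exists>y \<in> rchildren R x. rl y = (q, v')) t (snd (rl x)) a"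
    by (cases a) (simp_all add: ex_subset_card_iff)
qed

lemma atom_sat_mono:
  assumes "atom_sat P t v a"
    and "\<And>v'. v' \<in> atom_targets t v a \<Longrightarrow> P (atom_state a) v' \<Longrightarrow> P' (atom_state a) v'"
  shows "atom_sat P' t v a"
proof (cases a)
  case (Dia k q)
  then have "card {v' \<in> children t v. P q v'} \<le> card {v' \<in> children t v. P' q v'}"
    using assms(2) by (intro card_mono) auto
  then show ?thesis using assms(1) Dia by simp
next
  case (Box k q)
  then have "card {v' \<in> children t v. \<not> P' q v'} \<le> card {v' \<in> children t v. \<not> P q v'}"
    using assms(2) by (intro card_mono) auto
  then show ?thesis using assms(1) Box by simp
next
  case (Up q)
  then show ?thesis using assms by auto
qed

lemma tree_unfolding_exists:
  fixes succ :: "'c \<Rightarrow> 'c set"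
  assumes "\<And>c. finite (succ c)"
  obtains R :: "nat list set" and lbl :: "nat list \<Rightarrow> 'c"
  where "[] \<in> R" "\<And>i x. i # x \<in> R \<Longrightarrow> x \<in> R" "lbl [] = r"
    "\<And>x. x \<in> R \<Longrightarrow> lbl ` rchildren R x = succ (lbl x)"
proof -
  define ls where "ls c = (SOME xs. set xs = succ c)" for c
  have set_ls: "set (ls c) = succ c" for c
    unfolding ls_def by (rule someI_ex) (rule finite_list[OF assms])
  define lbl where "lbl = rec_list r (\<lambda>i x l. ls l ! i)"
  define ok where "ok = rec_list True (\<lambda>i x r. r \<and> i < length (ls (lbl x)))"
  have lbl_simps: "lbl [] = r" "lbl (i # x) = ls (lbl x) ! i" for i x
    by (simp_all add: lbl_def)
  have ok_simps: "ok []" "ok (i # x) \<longleftrightarrow> ok x \<and> i < length (ls (lbl x))" for i x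
    by (simp_all add: ok_def)
  have "lbl ` rchildren {x. ok x} x = succ (lbl x)" if "ok x" for x
  proof -
    have "rchildren {x. ok x} x = (\<lambda>i. i # x) ` {..<length (ls (lbl x))}"
      using that by (auto simp: rchildren_def ok_simps)
    then show ?thesis
      by (auto simp: image_image lbl_simps set_ls[symmetric] in_set_conv_nth)
  qed
  then show thesis
    using that[of "{x. ok x}" lbl] ok_simps lbl_simps by auto
qed

lemma nonincreasing_eventually_constant:
  fixes g :: "nat \<Rightarrow> nat"
  assumes "\<And>n. g (Suc n) \<le> g n"
  obtains N where "\<And>n. N \<le> n \<Longrightarrow> g n = g N"
proof -
  obtain N where "\<forall>n. g N \<le> g n"
    using ex_has_least_nat[of "\<lambda>_. True" 0 g] by blast
  then show thesis
    using that lift_Suc_antimono_le[of g, OF assms] by (meson antisym)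
qed

lemma no_descent_from:
  fixes g :: "nat \<Rightarrow> nat"
  assumes "\<And>n. N \<le> n \<Longrightarrow> g (Suc n) < g n"
  shows False
proof -
  obtain k where "(g (N + Suc k), g (N + k)) \<notin> {(x, y). x < y}"
    using wf_no_infinite_down_chainE[OF wf_less, of "\<lambda>k. g (N + k)"] by blast
  then show False
    using assms[of "N + k"] by simp
qed

fun subformulas :: "'ap pctl \<Rightarrow> 'ap pctl set" where
  "subformulas (Atom p) = {Atom p}"
| "subformulas (Neg a) = insert (Neg a) (subformulas a)"
| "subformulas (Or a c) = insert (Or a c) (subformulas a \<union> subformulas c)"
| "subformulas (Dn n a) = insert (Dn n a) (subformulas a)"
| "subformulas (EXn a) = insert (EXn a) (subformulas a)"
| "subformulas (EUn a c) = insert (EUn a c) (subformulas a \<union> subformulas c)"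
| "subformulas (EYn a) = insert (EYn a) (subformulas a)"
| "subformulas (ESn a c) = insert (ESn a c) (subformulas a \<union> subformulas c)"

lemma subformulas_refl [simp]: "\<psi> \<in> subformulas \<psi>"
  by (cases \<psi>) auto

lemma subformulas_trans: "\<psi>' \<in> subformulas \<psi> \<Longrightarrow> \<psi>'' \<in> subformulas \<psi>' \<Longrightarrow> \<psi>'' \<in> subformulas \<psi>"
  by (induction \<psi>) auto

lemma finite_subformulas [simp]: "finite (subformulas \<psi>)"
  by (induction \<psi>) auto

lemma size_subformula_le: "\<psi>' \<in> subformulas \<psi> \<Longrightarrow> size \<psi>' \<le> size \<psi>"
  by (induction \<psi>) auto

fun eu_path :: "'ap tree \<Rightarrow> 'ap pctl \<Rightarrow> 'ap pctl \<Rightarrow> nat \<Rightarrow> nat list \<Rightarrow> bool" where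
  "eu_path t a c 0 u = sat t u c"
| "eu_path t a c (Suc j) u = (sat t u a \<and> (\<exists>v' \<in> children t u. eu_path t a c j v'))"

lemma eu_path_if_sat_path:
  "f 0 = u \<Longrightarrow> \<forall>k<j. f (Suc k) \<in> children t (f k) \<Longrightarrow> sat t (f j) c \<Longrightarrow> \<forall>k<j. sat t (f k) a
    \<Longrightarrow> eu_path t a c j u"
proof (induction j arbitrary: u f)
  case (Suc j)
  then have "eu_path t a c j (f 1)"
    by (intro Suc.IH[of "f \<circ> Suc"]) auto
  then show ?case using Suc.prems by force
qed simp

lemma sat_path_if_eu_path:
  "eu_path t a c j u \<Longrightarrow> \<exists>f. f 0 = u \<and> (\<forall>k<j. f (Suc k) \<in> children t (f k))
    \<and> sat t (f j) c \<and> (\<forall>k<j. sat t (f k) a)"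
proof (induction j arbitrary: u)
  case 0
  then show ?case by (intro exI[of _ "\<lambda>_. u"]) auto
next
  case (Suc j)
  then obtain v' where "sat t u a" "v' \<in> children t u" "eu_path t a c j v'"
    by auto
  moreover obtain f where "f 0 = v'" "\<forall>k<j. f (Suc k) \<in> children t (f k)" "sat t (f j) c"
    "\<forall>k<j. sat t (f k) a"
    using Suc.IH calculation(3) by blast
  ultimately show ?case
    by (intro exI[of _ "\<lambda>k. case k of 0 \<Rightarrow> u | Suc k \<Rightarrow> f k"]) (auto split: nat.split)
qed

lemma sat_EUn_iff_eu_path: "sat t u (EUn a c) \<longleftrightarrow> (\<exists>j. eu_path t a c j u)"
proof
  assume "sat t u (EUn a c)"
  then obtain j f where "f 0 = u" "\<forall>k<j. f (Suc k) \<in> children t (f k)" "sat t (f j) c"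
    "\<forall>k<j. sat t (f k) a"
    by auto
  then show "\<exists>j. eu_path t a c j u" using eu_path_if_sat_path by blast
next
  assume "\<exists>j. eu_path t a c j u"
  then obtain j where "eu_path t a c j u" ..
  then show "sat t u (EUn a c)" using sat_path_if_eu_path[of t a c j u] by auto
qed

lemma sat_EUn_unfold:
  "sat t u (EUn a c) \<longleftrightarrow> sat t u c \<or> (sat t u a \<and> (\<exists>v' \<in> children t u. sat t v' (EUn a c)))"
proof -
  have "(\<exists>j. eu_path t a c j u) \<longleftrightarrow> eu_path t a c 0 u \<or> (\<exists>j. eu_path t a c (Suc j) u)"
    by (metis not0_implies_Suc)
  then show ?thesis
    unfolding sat_EUn_iff_eu_path by auto
qed

definition eu_dist :: "'ap tree \<Rightarrow> 'ap pctl \<Rightarrow> 'ap pctl \<Rightarrow> nat list \<Rightarrow> nat" where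
  "eu_dist t a c u = (LEAST j. eu_path t a c j u)"

lemma eu_dist_decreases:
  assumes "sat t u (EUn a c)" and "\<not> sat t u c"
  obtains v' where "v' \<in> children t u" "sat t v' (EUn a c)" "eu_dist t a c v' < eu_dist t a c u"
proof -
  have "eu_path t a c (eu_dist t a c u) u"
    using assms(1) unfolding sat_EUn_iff_eu_path eu_dist_def by (rule LeastI_ex)
  moreover obtain j where j: "eu_dist t a c u = Suc j"
    using calculation assms(2) by (cases "eu_dist t a c u") auto
  ultimately obtain v' where "v' \<in> children t u" "eu_path t a c j v'"
    by auto
  moreover have "eu_dist t a c v' < eu_dist t a c u"
    using Least_le[of "\<lambda>j. eu_path t a c j v'", OF calculation(2)] j unfolding eu_dist_def by simp
  moreover have "sat t v' (EUn a c)"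
    using calculation(2) sat_EUn_iff_eu_path by blast
  ultimately show thesis
    using that by blast
qed

lemma ex_le_Suc_iff: "(\<exists>j \<le> Suc n. P j) \<longleftrightarrow> P 0 \<or> (\<exists>j \<le> n. P (Suc j))"
  by (simp only: less_Suc_eq_le[symmetric] Ex_less_Suc2)

lemma sat_ESn_unfold:
  "sat t v (ESn a c) \<longleftrightarrow> sat t v c \<or> (v \<noteq> [] \<and> sat t v a \<and> sat t (tl v) (ESn a c))"
  by (cases v) (auto simp: ex_le_Suc_iff All_less_Suc2)

section \<open>The automaton\<close>

instance pctl :: (countable) countable
  by countable_datatype

definition state_of :: "bool \<Rightarrow> 'ap::countable pctl \<Rightarrow> nat" where
  "state_of b \<psi> = to_nat (b, \<psi>)"

lemma state_of_inject [simp]: "state_of b \<psi> = state_of b' \<psi>' \<longleftrightarrow> b = b' \<and> \<psi> = \<psi>'"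
  unfolding state_of_def by auto

lemma from_nat_state_of [simp]: "from_nat (state_of b \<psi>) = (b, \<psi>)"
  unfolding state_of_def by simp

text \<open>A copy in state state_of b \<psi> at node v checks that sat t v \<psi> = b. Negations are
  absorbed into the polarity b, so that every formula has a positive and a dual transition.\<close>
fun tr :: "bool \<Rightarrow> 'ap::countable pctl \<Rightarrow> 'ap set \<Rightarrow> bool \<Rightarrow> nat atom pbf" where
  "tr b (Atom p) \<sigma> root = (if (p \<in> \<sigma>) = b then PTrue else PFalse)"
| "tr b (Neg a) \<sigma> root = tr (\<not> b) a \<sigma> root"
| "tr b (Or a c) \<sigma> root =
    (if b then POr (tr True a \<sigma> root) (tr True c \<sigma> root)
     else PAnd (tr False a \<sigma> root) (tr False c \<sigma> root))"
| "tr b (Dn n a) \<sigma> root =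
    (if b then PAtom (Dia n (state_of True a)) else PAtom (Box n (state_of False a)))"
| "tr b (EXn a) \<sigma> root =
    (if b then PAtom (Dia 1 (state_of True a)) else PAtom (Box 1 (state_of False a)))"
| "tr b (EUn a c) \<sigma> root =
    (if b then POr (tr True c \<sigma> root) (PAnd (tr True a \<sigma> root) (PAtom (Dia 1 (state_of True (EUn a c)))))
     else PAnd (tr False c \<sigma> root) (POr (tr False a \<sigma> root) (PAtom (Box 1 (state_of False (EUn a c))))))"
| "tr b (EYn a) \<sigma> root = (if root then (if b then PFalse else PTrue) else PAtom (Up (state_of b a)))"
| "tr b (ESn a c) \<sigma> root =
    (if b then POr (tr True c \<sigma> root)
       (if root then PFalse else PAnd (tr True a \<sigma> root) (PAtom (Up (state_of True (ESn a c)))))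
     else PAnd (tr False c \<sigma> root)
       (if root then PTrue else POr (tr False a \<sigma> root) (PAtom (Up (state_of False (ESn a c))))))"

fun loop_type :: "bool \<Rightarrow> 'ap pctl \<Rightarrow> ctype" where
  "loop_type b (EUn a c) = (if b then Existential else Universal)"
| "loop_type b (ESn a c) = Upward"
| "loop_type b _ = Transient"

lemma loop_type_Universal_iff: "loop_type b \<psi> = Universal \<longleftrightarrow> \<not> b \<and> (\<exists>a c. \<psi> = EUn a c)"
  by (cases \<psi>) auto

lemma atoms_tr_subformula:
  "x \<in> atoms (tr b \<psi> \<sigma> root) \<Longrightarrow> \<exists>b' \<psi>'. atom_state x = state_of b' \<psi>' \<and> \<psi>' \<in> subformulas \<psi>"
  by (induction \<psi> arbitrary: b) (simp_all split: if_splits; fastforce)+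

lemma atoms_tr:
  assumes "x \<in> atoms (tr b \<psi> \<sigma> root)"
  shows "x \<in> loop_atoms (loop_type b \<psi>) (state_of b \<psi>) \<or>
    (\<exists>b' \<psi>'. atom_state x = state_of b' \<psi>' \<and> \<psi>' \<in> subformulas \<psi> \<and> size \<psi>' < size \<psi>)"
proof -
  have smaller: "\<exists>b' \<psi>'. atom_state x = state_of b' \<psi>' \<and> \<psi>' \<in> subformulas \<psi> \<and> size \<psi>' < size \<psi>"
    if "x \<in> atoms (tr b'' a \<sigma> root)" "a \<in> subformulas \<psi>" "size a < size \<psi>" for b'' a
    using atoms_tr_subformula[OF that(1)] that(2,3) subformulas_trans size_subformula_le
    by (meson order_le_less_trans)
  show ?thesis
  proof (cases \<psi>)
    case (Neg a)
    with assms smaller[of _ a] show ?thesis by auto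
  next
    case (Or a c)
    with assms smaller[of _ a] smaller[of _ c] show ?thesis by (auto split: if_splits)
  next
    case (Dn n a)
    with assms show ?thesis by (auto split: if_splits)
  next
    case (EXn a)
    with assms show ?thesis by (auto split: if_splits)
  next
    case (EUn a c)
    with assms smaller[of _ a] smaller[of _ c] show ?thesis by (auto split: if_splits)
  next
    case (EYn a)
    with assms show ?thesis by (auto split: if_splits)
  next
    case (ESn a c)
    with assms smaller[of _ a] smaller[of _ c] show ?thesis by (auto split: if_splits)
  qed (use assms in \<open>auto split: if_splits\<close>)
qed

definition aut :: "'ap::countable pctl \<Rightarrow> 'ap hta" where
  "aut \<phi> = \<lparr>states = {state_of b \<psi> | b \<psi>. \<psi> \<in> subformulas \<phi>},
    delta = (\<lambda>q. case from_nat q of (b, \<psi>) \<Rightarrow> tr b \<psi>),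
    init = state_of True \<phi>,
    acc = {state_of False (EUn a c) | a c. EUn a c \<in> subformulas \<phi>}\<rparr>"

lemma aut_simps [simp]:
  "states (aut \<phi>) = {state_of b \<psi> | b \<psi>. \<psi> \<in> subformulas \<phi>}"
  "delta (aut \<phi>) (state_of b \<psi>) = tr b \<psi>"
  "init (aut \<phi>) = state_of True \<phi>"
  "acc (aut \<phi>) = {state_of False (EUn a c) | a c. EUn a c \<in> subformulas \<phi>}"
  by (simp_all add: aut_def)

lemma state_of_in_acc_aut:
  "state_of b \<psi> \<in> acc (aut \<phi>) \<longleftrightarrow> loop_type b \<psi> = Universal \<and> \<psi> \<in> subformulas \<phi>"
  by (cases \<psi>) auto

lemma hta_wf_aut: "hta_wf (aut \<phi>)"
proof -
  have "states (aut \<phi>) = (\<lambda>(b, \<psi>). state_of b \<psi>) ` (UNIV \<times> subformulas \<phi>)"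
    by auto
  then show ?thesis
    unfolding hta_wf_def by auto
qed

lemma linear_hesitant_aut:
  fixes \<phi> :: "'ap::countable pctl"
  shows "linear_hesitant (aut \<phi>)"
proof (rule linear_hesitant_if_ranked[where rank = "\<lambda>q. size (snd (from_nat q :: bool \<times> 'ap pctl))"
      and ty = "\<lambda>q. case from_nat q of (b, \<psi>) \<Rightarrow> loop_type b (\<psi> :: 'ap pctl)"])
  show "finite (states (aut \<phi>))"
    using hta_wf_aut[of \<phi>] unfolding hta_wf_def by blast
next
  fix q \<sigma> \<rho> a
  assume "q \<in> states (aut \<phi>)" "a \<in> atoms (delta (aut \<phi>) q \<sigma> \<rho>)"
  then obtain b \<psi> where "q = state_of b \<psi>" "\<psi> \<in> subformulas \<phi>" "a \<in> atoms (tr b \<psi> \<sigma> \<rho>)"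
    by auto
  then show "atom_state a \<in> states (aut \<phi>) \<and>
      (a \<in> loop_atoms (case from_nat q of (b, \<psi>) \<Rightarrow> loop_type b (\<psi> :: 'ap pctl)) q \<or>
       size (snd (from_nat (atom_state a) :: bool \<times> 'ap pctl)) < size (snd (from_nat q :: bool \<times> 'ap pctl)))"
    using atoms_tr[of a b \<psi> \<sigma> \<rho>] atom_state_loop_atoms subformulas_trans by fastforce
qed

definition state_holds :: "'ap::countable tree \<Rightarrow> nat \<Rightarrow> nat list \<Rightarrow> bool" where
  "state_holds t q v = (case from_nat q of (b, \<psi>) \<Rightarrow> sat t v \<psi> = b)"

lemma state_holds_state_of [simp]: "state_holds t (state_of b \<psi>) v \<longleftrightarrow> sat t v \<psi> = b"
  by (simp add: state_holds_def)

lemma eval_tr_iff_sat: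
  "eval_pbf (atom_sat (state_holds t) t v) (tr b \<psi> (lab t v) (v = [])) \<longleftrightarrow> sat t v \<psi> = b"
proof (induction \<psi> arbitrary: b)
  case (Neg a)
  then show ?case by auto
next
  case (Or a c)
  then show ?case by (cases b) auto
next
  case (Dn n a)
  then show ?case by (cases b) (auto simp: not_le)
next
  case (EXn a)
  then show ?case by (cases b) (auto simp: Suc_le_eq card_gt_0_iff less_Suc_eq)
next
  case (EUn a c)
  then show ?case
    unfolding sat_EUn_unfold[of t v]
    by (cases b) (auto simp: Suc_le_eq card_gt_0_iff less_Suc_eq simp del: sat.simps)
next
  case (EYn a)
  then show ?case by (cases b) auto
next
  case (ESn a c)
  then show ?case
    unfolding sat_ESn_unfold[of t v] by (cases b; cases "v = []") simp_all
qed simp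

section \<open>Accepting runs are correct\<close>

lemma sat_if_eval_tr_run:
  assumes "eval_pbf (atom_holds t R rl x) (tr b \<psi> (lab t v) (v = []))" and v: "v = snd (rl x)"
    and children: "\<And>y a. y \<in> rchildren R x \<Longrightarrow> a \<in> atoms (tr b \<psi> (lab t v) (v = [])) \<Longrightarrow>
      fst (rl y) = atom_state a \<Longrightarrow> state_holds t (fst (rl y)) (snd (rl y))"
  shows "sat t v \<psi> = b"
proof -
  have "atom_sat (state_holds t) t v a"
    if "a \<in> atoms (tr b \<psi> (lab t v) (v = []))" "atom_holds t R rl x a" for a
    using that(2) unfolding atom_holds_eq_atom_sat v[symmetric]
    by (rule atom_sat_mono) (use children[OF _ that(1)] in force)
  then show ?thesis
    using eval_pbf_mono assms(1) eval_tr_iff_sat by metis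
qed

locale accepting_run =
  fixes \<phi> :: "'ap::countable pctl" and t :: "'ap tree" and s :: "nat list"
    and R :: "nat list set" and rl :: "nat list \<Rightarrow> nat \<times> nat list"
  assumes run: "is_run (aut \<phi>) t s R rl" and accepting: "accepting (aut \<phi>) R rl"
begin

definition correct :: "nat list \<Rightarrow> bool" where
  "correct y \<longleftrightarrow> state_holds t (fst (rl y)) (snd (rl y))"

lemma parent_in_run: "i # x \<in> R \<Longrightarrow> x \<in> R"
  using run by (simp add: is_run_def)

lemma rchildren_in_run: "y \<in> rchildren R x \<Longrightarrow> y \<in> R"
  by (simp add: rchildren_def)

lemma node_state:
  assumes "x \<in> R"
  obtains b and \<psi> :: "'ap pctl" where "fst (rl x) = state_of b \<psi>" "\<psi> \<in> subformulas \<phi>"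
  using assms run by (auto simp: is_run_def)

lemma node_eval:
  fixes \<psi> :: "'ap pctl"
  shows "x \<in> R \<Longrightarrow> fst (rl x) = state_of b \<psi> \<Longrightarrow>
    eval_pbf (atom_holds t R rl x) (tr b \<psi> (lab t (snd (rl x))) (snd (rl x) = []))"
  using run by (auto simp: is_run_def)

lemma sat_if_eval_tr_below:
  fixes \<psi> :: "'ap pctl"
  assumes "x \<in> R" "eval_pbf (atom_holds t R rl x) (tr b \<psi> (lab t (snd (rl x))) (snd (rl x) = []))"
    and below: "\<And>y b' (\<psi>' :: 'ap pctl). y \<in> R \<Longrightarrow> fst (rl y) = state_of b' \<psi>' \<Longrightarrow> size \<psi>' \<le> size \<psi> \<Longrightarrow> correct y"
  shows "sat t (snd (rl x)) \<psi> = b"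
  using assms(2) refl
proof (rule sat_if_eval_tr_run)
  fix y a
  assume "y \<in> rchildren R x" "a \<in> atoms (tr b \<psi> (lab t (snd (rl x))) (snd (rl x) = []))"
    "fst (rl y) = atom_state a"
  moreover obtain b' and \<psi>' :: "'ap pctl" where "atom_state a = state_of b' \<psi>'" "\<psi>' \<in> subformulas \<psi>"
    using atoms_tr_subformula calculation(2) by blast
  ultimately show "state_holds t (fst (rl y)) (snd (rl y))"
    using below[of y b' \<psi>'] size_subformula_le[of \<psi>' \<psi>] rchildren_in_run[of y x]
    by (simp add: correct_def)
qed

lemma correct_if_loop_children_correct:
  fixes \<psi> :: "'ap pctl"
  assumes "x \<in> R" "fst (rl x) = state_of b \<psi>"
    and below: "\<And>y b' (\<psi>' :: 'ap pctl). y \<in> R \<Longrightarrow> fst (rl y) = state_of b' \<psi>' \<Longrightarrow> size \<psi>' < size \<psi> \<Longrightarrow> correct y"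
    and loop: "\<And>y. y \<in> rchildren R x \<Longrightarrow> fst (rl y) = state_of b \<psi> \<Longrightarrow> correct y"
  shows "correct x"
proof -
  have "sat t (snd (rl x)) \<psi> = b"
    using node_eval[OF assms(1,2)] refl
  proof (rule sat_if_eval_tr_run)
    fix y a
    assume "y \<in> rchildren R x" "a \<in> atoms (tr b \<psi> (lab t (snd (rl x))) (snd (rl x) = []))"
      "fst (rl y) = atom_state a"
    from atoms_tr[OF this(2)] consider "a \<in> loop_atoms (loop_type b \<psi>) (state_of b \<psi>)"
      | b' and \<psi>' :: "'ap pctl" where "atom_state a = state_of b' \<psi>'" "size \<psi>' < size \<psi>"
      by blast
    then show "state_holds t (fst (rl y)) (snd (rl y))"
    proof cases
      case 1
      then have "fst (rl y) = state_of b \<psi>"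
        using \<open>fst (rl y) = atom_state a\<close> by (simp add: atom_state_loop_atoms)
      then show ?thesis
        using loop \<open>y \<in> rchildren R x\<close> unfolding correct_def by blast
    next
      case 2
      then show ?thesis
        using below[of y b' \<psi>'] rchildren_in_run \<open>y \<in> rchildren R x\<close> \<open>fst (rl y) = atom_state a\<close>
        unfolding correct_def by simp
    qed
  qed
  then show ?thesis
    using assms(2) by (simp add: correct_def)
qed

lemma drop_in_run: "x \<in> R \<Longrightarrow> drop k x \<in> R"
proof (induction k arbitrary: x)
  case (Suc k)
  then show ?case by (cases x) (auto dest: parent_in_run)
qed simp

lemma path_from_root:
  assumes "x \<in> R" "p 0 = x" "\<And>n. p (Suc n) \<in> rchildren R (p n)"
  obtains P where "P 0 = []" "\<And>n. P (Suc n) \<in> rchildren R (P n)" "\<And>n. P (n + length x) = p n"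
proof
  define L where "L = length x"
  define P where "P n = (if n < L then drop (L - n) x else p (n - L))" for n
  show "P 0 = []" "P (n + length x) = p n" for n
    using assms(2) by (simp_all add: P_def L_def)
  show "P (Suc n) \<in> rchildren R (P n)" for n
  proof (cases "Suc n < L")
    case True
    then have "drop (L - Suc n) x = x ! (L - Suc n) # drop (Suc (L - Suc n)) x"
      by (simp add: L_def Cons_nth_drop_Suc)
    also have "Suc (L - Suc n) = L - n"
      using True by simp
    finally have "drop (L - Suc n) x = x ! (L - Suc n) # drop (L - n) x" .
    moreover have "drop (L - Suc n) x \<in> R"
      using drop_in_run[OF assms(1)] .
    ultimately show ?thesis
      using True by (auto simp: P_def rchildren_def)
  next
    case False
    show ?thesis
    proof (cases "Suc n = L")
      case True
      then have "x = hd x # drop (L - n) x"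
        by (cases x) (auto simp: L_def)
      then show ?thesis
        using True assms(1,2) by (auto simp: P_def rchildren_def)
    next
      case False
      then have "L \<le> n"
        using \<open>\<not> Suc n < L\<close> by simp
      then show ?thesis
        using assms(3)[of "n - L"] by (simp add: P_def Suc_diff_le)
    qed
  qed
qed

lemma accepting_from_node:
  assumes "x \<in> R" "p 0 = x" "\<And>n. p (Suc n) \<in> rchildren R (p n)"
  shows "\<exists>\<^sub>\<infinity>n. fst (rl (p n)) \<in> acc (aut \<phi>)"
proof -
  obtain P where P: "P 0 = []" "\<And>n. P (Suc n) \<in> rchildren R (P n)" "\<And>n. P (n + length x) = p n"
    using path_from_root[OF assms] by blast
  then have P_acc: "\<exists>\<^sub>\<infinity>n. fst (rl (P n)) \<in> acc (aut \<phi>)"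
    using accepting unfolding accepting_def by blast
  show ?thesis
    unfolding INFM_nat
  proof
    fix m
    obtain n where "m + length x < n" "fst (rl (P n)) \<in> acc (aut \<phi>)"
      using P_acc unfolding INFM_nat by blast
    then show "\<exists>n>m. fst (rl (p n)) \<in> acc (aut \<phi>)"
      using P(3)[of "n - length x"] by (intro exI[of _ "n - length x"]) simp
  qed
qed

lemma no_rejecting_trap:
  assumes "B \<subseteq> R"
    and trap: "\<And>y. y \<in> B \<Longrightarrow> fst (rl y) \<notin> acc (aut \<phi>) \<and> (\<exists>y' \<in> rchildren R y. y' \<in> B)"
  shows "B = {}"
proof (rule ccontr)
  assume "B \<noteq> {}"
  then obtain x where "x \<in> B" by blast
  define succ where "succ y = (SOME y'. y' \<in> rchildren R y \<and> y' \<in> B)" for y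
  define p where "p n = (succ ^^ n) x" for n
  have succ: "succ y \<in> rchildren R y \<and> succ y \<in> B" if "y \<in> B" for y
    unfolding succ_def by (rule someI_ex) (use trap[OF that] in blast)
  have "p n \<in> B" for n
    by (induction n) (simp_all add: p_def \<open>x \<in> B\<close> succ)
  then have p: "p n \<in> B \<and> p (Suc n) \<in> rchildren R (p n)" for n
    using succ by (simp add: p_def)
  have "\<exists>\<^sub>\<infinity>n. fst (rl (p n)) \<in> acc (aut \<phi>)"
    using accepting_from_node[of x p] p assms(1) \<open>x \<in> B\<close> by (auto simp: p_def)
  then obtain n where "fst (rl (p n)) \<in> acc (aut \<phi>)"
    by (rule INFM_E)
  then show False
    using p trap by blast
qed

lemma eu_path_not_refuted:
  assumes below: "\<And>y b' (\<psi>' :: 'ap pctl). y \<in> R \<Longrightarrow> fst (rl y) = state_of b' \<psi>' \<Longrightarrow>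
      size \<psi>' < size (EUn a c) \<Longrightarrow> correct y"
  shows "eu_path t a c j u \<Longrightarrow> x \<in> R \<Longrightarrow> rl x \<noteq> (state_of False (EUn a c), u)"
proof (induction j arbitrary: u x)
  have sat_if_eval: "sat t (snd (rl x)) \<psi> = b"
    if "x \<in> R" "eval_pbf (atom_holds t R rl x) (tr b \<psi> (lab t (snd (rl x))) (snd (rl x) = []))"
      "size \<psi> < size (EUn a c)" for x b \<psi>
    using sat_if_eval_tr_below[OF that(1,2)] below that(3) by fastforce
  {
    case 0
    show ?case
    proof
      assume "rl x = (state_of False (EUn a c), u)"
      then show False
        using node_eval[of x False "EUn a c"] sat_if_eval[of x False c] 0 by auto
    qed
  next
    case (Suc j)
    then obtain v' where "sat t u a" "v' \<in> children t u" "eu_path t a c j v'"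
      by auto
    show ?case
    proof
      assume x: "rl x = (state_of False (EUn a c), u)"
      then have "eval_pbf (atom_holds t R rl x) (tr False a (lab t u) (u = []))
        \<or> atom_holds t R rl x (Box 1 (state_of False (EUn a c)))"
        using node_eval[of x False "EUn a c"] Suc.prems by auto
      then show False
      proof
        assume "eval_pbf (atom_holds t R rl x) (tr False a (lab t u) (u = []))"
        then show False
          using sat_if_eval[of x False a] Suc.prems x \<open>sat t u a\<close> by auto
      next
        assume "atom_holds t R rl x (Box 1 (state_of False (EUn a c)))"
        then obtain y where "y \<in> rchildren R x" "rl y = (state_of False (EUn a c), v')"
          using \<open>v' \<in> children t u\<close> x by (auto simp: less_Suc_eq)
        then show False
          using Suc.IH[OF \<open>eu_path t a c j v'\<close>] rchildren_in_run by blast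
      qed
    qed
  }
qed

lemma correct_if_correct_below:
  fixes \<psi> :: "'ap pctl"
  assumes below: "\<And>y b' (\<psi>' :: 'ap pctl). y \<in> R \<Longrightarrow> fst (rl y) = state_of b' \<psi>' \<Longrightarrow>
      size \<psi>' < size \<psi> \<Longrightarrow> correct y"
    and x: "x \<in> R" "fst (rl x) = state_of b \<psi>"
  shows "correct x"
proof (cases "loop_type b \<psi> = Universal")
  case True
  then obtain a c where \<psi>: "\<psi> = EUn a c" and "\<not> b"
    by (auto simp: loop_type_Universal_iff)
  txt \<open>Negated EU states are accepting and may loop forever; a witness path refutes them.\<close>
  have "rl x = (state_of False (EUn a c), snd (rl x))"
    using x \<psi> \<open>\<not> b\<close> by (simp add: prod_eq_iff)
  then have "\<not> eu_path t a c j (snd (rl x))" for j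
    using eu_path_not_refuted[of a c j "snd (rl x)" x] below \<psi> x(1) by blast
  then have "\<not> sat t (snd (rl x)) (EUn a c)"
    using sat_EUn_iff_eu_path by blast
  then show ?thesis
    using x(2) \<psi> \<open>\<not> b\<close> by (simp add: correct_def)
next
  case False
  define B where "B = {y \<in> R. fst (rl y) = state_of b \<psi> \<and> \<not> correct y}"
  have "B = {}"
  proof (rule no_rejecting_trap)
    fix y assume "y \<in> B"
    then have "\<exists>y' \<in> rchildren R y. fst (rl y') = state_of b \<psi> \<and> \<not> correct y'"
      using correct_if_loop_children_correct[of y b \<psi>] below by (auto simp: B_def)
    then show "fst (rl y) \<notin> acc (aut \<phi>) \<and> (\<exists>y' \<in> rchildren R y. y' \<in> B)"
      using \<open>y \<in> B\<close> False state_of_in_acc_aut rchildren_in_run by (auto simp: B_def)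
  qed (auto simp: B_def)
  then show ?thesis
    using x by (auto simp: B_def)
qed

theorem correct_nodes: "x \<in> R \<Longrightarrow> correct x"
proof -
  have "\<forall>x \<in> R. fst (rl x) = state_of b \<psi> \<longrightarrow> correct x" for b and \<psi> :: "'ap pctl"
    by (induction \<psi> arbitrary: b rule: measure_induct_rule[where f = size])
      (use correct_if_correct_below in blast)
  then show "x \<in> R \<Longrightarrow> correct x"
    using node_state by blast
qed

end

lemma sat_if_accepting_run:
  assumes "is_run (aut \<phi>) t s R rl" "accepting (aut \<phi>) R rl"
  shows "sat t s \<phi>"
proof -
  interpret accepting_run \<phi> t s R rl
    using assms by unfold_locales
  have "[] \<in> R" "rl [] = (state_of True \<phi>, s)"
    using assms(1) by (auto simp: is_run_def)
  then show ?thesis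
    using correct_nodes by (fastforce simp: correct_def)
qed

section \<open>Models have accepting runs\<close>

text \<open>The run on a model of \<phi> is built from obligations (b, \<psi>, v) with sat t v \<psi> = b. An
  obligation is passed on unchanged only along self_step; for a positive EU this forces the
  copy towards the nearest witness, so that it cannot stay forever in its non-accepting state.\<close>
fun self_step :: "'ap tree \<Rightarrow> bool \<Rightarrow> 'ap pctl \<Rightarrow> nat list \<Rightarrow> nat list \<Rightarrow> bool" where
  "self_step t True (EUn a c) v v' = (v' \<in> children t v \<and> eu_dist t a c v' < eu_dist t a c v)"
| "self_step t False (EUn a c) v v' = (v' \<in> children t v)"
| "self_step t b (ESn a c) v v' = (v \<noteq> [] \<and> v' = tl v)"
| "self_step t b \<psi> v v' = False"

definition successors ::
  "'ap tree \<Rightarrow> bool \<times> 'ap pctl \<times> nat list \<Rightarrow> (bool \<times> 'ap pctl \<times> nat list) set" where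
  "successors t = (\<lambda>(b, \<psi>, v). {(b', \<psi>', v'). \<psi>' \<in> subformulas \<psi> \<and> (v' \<in> children t v \<or> v' = tl v) \<and>
     sat t v' \<psi>' = b' \<and> (size \<psi>' < size \<psi> \<or> b' = b \<and> \<psi>' = \<psi> \<and> self_step t b \<psi> v v')})"

lemma mem_successors_iff:
  "(b', \<psi>', v') \<in> successors t (b, \<psi>, v) \<longleftrightarrow> \<psi>' \<in> subformulas \<psi> \<and> (v' \<in> children t v \<or> v' = tl v) \<and>
     sat t v' \<psi>' = b' \<and> (size \<psi>' < size \<psi> \<or> b' = b \<and> \<psi>' = \<psi> \<and> self_step t b \<psi> v v')"
  by (simp add: successors_def)

lemma finite_successors: "finite (successors t ob)"
proof -
  obtain b \<psi> v where ob: "ob = (b, \<psi>, v)"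
    by (cases ob) auto
  have "successors t ob \<subseteq> UNIV \<times> subformulas \<psi> \<times> insert (tl v) (children t v)"
    by (auto simp: ob successors_def)
  then show ?thesis
    by (rule finite_subset) auto
qed

lemma self_step_if_loop_target:
  "a \<in> loop_atoms (loop_type b \<psi>) (state_of b \<psi>) \<Longrightarrow> loop_type b \<psi> \<noteq> Existential \<Longrightarrow>
    v' \<in> atom_targets t v a \<Longrightarrow> self_step t b \<psi> v v'"
  by (cases \<psi>; cases b) (auto split: if_splits)

definition successor_copy :: "'ap::countable tree \<Rightarrow> bool \<times> 'ap pctl \<times> nat list \<Rightarrow> nat \<Rightarrow> nat list \<Rightarrow> bool" where
  "successor_copy t ob q v' \<longleftrightarrow> (\<exists>b' \<psi>'. q = state_of b' \<psi>' \<and> (b', \<psi>', v') \<in> successors t ob)"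

lemma successor_copy_state_of [simp]:
  "successor_copy t ob (state_of b' \<psi>') v' \<longleftrightarrow> (b', \<psi>', v') \<in> successors t ob"
  by (auto simp: successor_copy_def)

lemma atom_sat_successor_copy_below:
  assumes "atom_sat (state_holds t) t v a" "atom_state a = state_of b' \<psi>'"
    and "\<psi>' \<in> subformulas \<psi>" "size \<psi>' < size \<psi>"
  shows "atom_sat (successor_copy t (b, \<psi>, v)) t v a"
  using assms(1)
proof (rule atom_sat_mono)
  fix v' assume "v' \<in> atom_targets t v a" "state_holds t (atom_state a) v'"
  then show "successor_copy t (b, \<psi>, v) (atom_state a) v'"
    using assms(2-4) atom_targets_subset by (fastforce simp: mem_successors_iff)
qed

lemma eval_tr_successor_copy_below:
  assumes "sat t v \<psi>' = b'" "\<psi>' \<in> subformulas \<psi>" "size \<psi>' < size \<psi>"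
  shows "eval_pbf (atom_sat (successor_copy t (b, \<psi>, v)) t v) (tr b' \<psi>' (lab t v) (v = []))"
  using assms(1)[folded eval_tr_iff_sat]
proof (rule eval_pbf_mono)
  fix a assume "a \<in> atoms (tr b' \<psi>' (lab t v) (v = []))" "atom_sat (state_holds t) t v a"
  moreover obtain b'' \<psi>'' where "atom_state a = state_of b'' \<psi>''" "\<psi>'' \<in> subformulas \<psi>'"
    using atoms_tr_subformula calculation(1) by blast
  moreover have "size \<psi>'' < size \<psi>"
    using size_subformula_le[OF calculation(4)] assms(3) by simp
  ultimately show "atom_sat (successor_copy t (b, \<psi>, v)) t v a"
    using atom_sat_successor_copy_below assms(2) subformulas_trans by blast
qed

lemma atom_sat_successor_copy_loop:
  assumes "atom_sat (state_holds t) t v a" "a \<in> loop_atoms (loop_type b \<psi>) (state_of b \<psi>)"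
    and "loop_type b \<psi> \<noteq> Existential"
  shows "atom_sat (successor_copy t (b, \<psi>, v)) t v a"
  using assms(1)
proof (rule atom_sat_mono)
  fix v' assume "v' \<in> atom_targets t v a" "state_holds t (atom_state a) v'"
  moreover have "atom_state a = state_of b \<psi>"
    using assms(2) by (rule atom_state_loop_atoms)
  ultimately have "sat t v' \<psi> = b" "v' \<in> insert (tl v) (children t v)" "self_step t b \<psi> v v'"
    using atom_targets_subset self_step_if_loop_target[OF assms(2,3)] by auto
  then show "successor_copy t (b, \<psi>, v) (atom_state a) v'"
    using \<open>atom_state a = state_of b \<psi>\<close> by (auto simp: mem_successors_iff)
qed

lemma eval_tr_successor_copy:
  fixes \<psi> :: "'ap::countable pctl"
  assumes "sat t v \<psi> = b"
  shows "eval_pbf (atom_sat (successor_copy t (b, \<psi>, v)) t v) (tr b \<psi> (lab t v) (v = []))"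
proof (cases "loop_type b \<psi> = Existential")
  case False
  show ?thesis
    using assms[folded eval_tr_iff_sat]
  proof (rule eval_pbf_mono)
    fix a assume "a \<in> atoms (tr b \<psi> (lab t v) (v = []))" "atom_sat (state_holds t) t v a"
    then show "atom_sat (successor_copy t (b, \<psi>, v)) t v a"
      using atoms_tr atom_sat_successor_copy_loop[OF _ _ False] atom_sat_successor_copy_below by blast
  qed
next
  case True
  then obtain a c where \<psi>: "\<psi> = EUn a c" and b
    by (cases \<psi>) (auto split: if_splits)
  show ?thesis
  proof (cases "sat t v c")
    case True
    then show ?thesis
      using eval_tr_successor_copy_below[of t v c True] \<psi> \<open>b\<close> by simp
  next
    case False
    then obtain v' where "v' \<in> children t v" "sat t v' (EUn a c)" "eu_dist t a c v' < eu_dist t a c v"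
      using eu_dist_decreases assms \<psi> \<open>b\<close> by blast
    moreover have "sat t v a"
      using False assms \<psi> \<open>b\<close> sat_EUn_unfold by blast
    ultimately have witness:
      "{v'} \<subseteq> {v' \<in> children t v. successor_copy t (b, \<psi>, v) (state_of True (EUn a c)) v'}"
      by (simp add: \<psi> \<open>b\<close> mem_successors_iff)
    have "atom_sat (successor_copy t (b, \<psi>, v)) t v (Dia 1 (state_of True (EUn a c)))"
      using card_mono[OF _ witness] by simp
    then show ?thesis
      using eval_tr_successor_copy_below[of t v a True] \<open>sat t v a\<close> \<psi> \<open>b\<close> by simp
  qed
qed

lemma successor_chain_eventually_loops:
  assumes "\<And>n. c (Suc n) \<in> successors t (c n)"
  obtains N b \<psi> where "\<And>n. N \<le> n \<Longrightarrow>
    fst (c n) = b \<and> fst (snd (c n)) = \<psi> \<and> self_step t b \<psi> (snd (snd (c n))) (snd (snd (c (Suc n))))"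
proof -
  define b where "b n = fst (c n)" for n
  define \<psi> where "\<psi> n = fst (snd (c n))" for n
  define v where "v n = snd (snd (c n))" for n
  have step: "size (\<psi> (Suc n)) < size (\<psi> n) \<or>
      b (Suc n) = b n \<and> \<psi> (Suc n) = \<psi> n \<and> self_step t (b n) (\<psi> n) (v n) (v (Suc n))" for n
  proof -
    obtain b0 \<psi>0 v0 b1 \<psi>1 v1 where "c n = (b0, \<psi>0, v0)" "c (Suc n) = (b1, \<psi>1, v1)"
      by (metis prod_cases3)
    then show ?thesis
      using assms[of n] by (simp add: b_def \<psi>_def v_def mem_successors_iff)
  qed
  have "size (\<psi> (Suc n)) \<le> size (\<psi> n)" for n
    using step[of n] by auto
  then obtain N where N: "\<And>n. N \<le> n \<Longrightarrow> size (\<psi> n) = size (\<psi> N)"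
    using nonincreasing_eventually_constant[of "\<lambda>n. size (\<psi> n)"] by blast
  have stay: "b (Suc n) = b n \<and> \<psi> (Suc n) = \<psi> n \<and> self_step t (b n) (\<psi> n) (v n) (v (Suc n))"
    if "N \<le> n" for n
    using step[of n] N[of n] N[of "Suc n"] that by simp
  have const: "b n = b N \<and> \<psi> n = \<psi> N" if "N \<le> n" for n
    using that by (induction n rule: dec_induct) (auto dest: stay)
  show thesis
  proof (rule that)
    fix n assume "N \<le> n"
    then show "fst (c n) = b N \<and> fst (snd (c n)) = \<psi> N \<and>
        self_step t (b N) (\<psi> N) (snd (snd (c n))) (snd (snd (c (Suc n))))"
      using const[of n] stay[of n] by (simp add: b_def \<psi>_def v_def)
  qed
qed

lemma successor_chain_universal:
  assumes "\<And>n. c (Suc n) \<in> successors t (c n)"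
  shows "\<exists>\<^sub>\<infinity>n. loop_type (fst (c n)) (fst (snd (c n))) = Universal"
proof -
  obtain N b \<psi> where loop: "\<And>n. N \<le> n \<Longrightarrow>
      fst (c n) = b \<and> fst (snd (c n)) = \<psi> \<and> self_step t b \<psi> (snd (snd (c n))) (snd (snd (c (Suc n))))"
    using successor_chain_eventually_loops[of c t, OF assms] by blast
  define v where "v n = snd (snd (c n))" for n
  have "loop_type b \<psi> = Universal"
  proof (rule ccontr)
    assume not_universal: "loop_type b \<psi> \<noteq> Universal"
    show False
    proof (cases \<psi>)
      case (EUn a c')
      then have b
        using not_universal by (cases b) auto
      then have "eu_dist t a c' (v (Suc n)) < eu_dist t a c' (v n)" if "N \<le> n" for n
        using loop[OF that] EUn by (simp add: v_def)
      then show False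
        by (rule no_descent_from)
    next
      case (ESn a c')
      then have "length (v (Suc n)) < length (v n)" if "N \<le> n" for n
        using loop[OF that] by (cases b) (auto simp: v_def)
      then show False
        by (rule no_descent_from)
    qed (use loop[of N] in simp_all)
  qed
  then show ?thesis
    unfolding INFM_nat_le
  proof (intro allI)
    fix m
    show "\<exists>n\<ge>m. loop_type (fst (c n)) (fst (snd (c n))) = Universal"
      using loop[of "max m N"] \<open>loop_type b \<psi> = Universal\<close> by (intro exI[of _ "max m N"]) simp
  qed
qed

locale obligation_tree =
  fixes \<phi> :: "'ap::countable pctl" and t :: "'ap tree"
    and R :: "nat list set" and lbl :: "nat list \<Rightarrow> bool \<times> 'ap pctl \<times> nat list"
  assumes model: "sat t [] \<phi>"
    and root_in_tree: "[] \<in> R" and parent_in_tree: "\<And>i x. i # x \<in> R \<Longrightarrow> x \<in> R"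
    and lbl_root: "lbl [] = (True, \<phi>, [])"
    and lbl_children: "\<And>x. x \<in> R \<Longrightarrow> lbl ` rchildren R x = successors t (lbl x)"
begin

definition rl :: "nat list \<Rightarrow> nat \<times> nat list" where
  "rl x = (case lbl x of (b, \<psi>, v) \<Rightarrow> (state_of b \<psi>, v))"

lemma lbl_child:
  assumes "i # x \<in> R"
  shows "lbl (i # x) \<in> successors t (lbl x)"
  using lbl_children[OF parent_in_tree[OF assms]] assms by (auto simp: rchildren_def)

lemma obligation_holds:
  "x \<in> R \<Longrightarrow> lbl x = (b, \<psi>, v) \<Longrightarrow> \<psi> \<in> subformulas \<phi> \<and> in_dom t v \<and> sat t v \<psi> = b"
proof (induction x arbitrary: b \<psi> v)
  case Nil
  then show ?case using lbl_root model by simp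
next
  case (Cons i x)
  obtain b' \<psi>' v' where lbl_x: "lbl x = (b', \<psi>', v')"
    by (cases "lbl x") auto
  then have "\<psi>' \<in> subformulas \<phi>" "in_dom t v'"
    using Cons.IH parent_in_tree[OF Cons.prems(1)] by auto
  then show ?case
    using lbl_child[OF Cons.prems(1)] Cons.prems(2) lbl_x subformulas_trans in_dom_children in_dom_tl
    by (auto simp: mem_successors_iff)
qed

lemma atom_holds_successor_copy:
  assumes "x \<in> R"
  shows "atom_holds t R rl x = atom_sat (successor_copy t (lbl x)) t (snd (rl x))"
proof -
  have "(\<exists>y \<in> rchildren R x. rl y = (q, v')) \<longleftrightarrow> successor_copy t (lbl x) q v'" for q v'
  proof -
    have "(\<exists>y \<in> rchildren R x. rl y = (q, v')) \<longleftrightarrow>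
        (\<exists>(b', \<psi>', v'') \<in> lbl ` rchildren R x. (state_of b' \<psi>', v'') = (q, v'))"
      by (auto simp: rl_def split: prod.splits)
    then show ?thesis
      unfolding lbl_children[OF assms] successor_copy_def by auto
  qed
  then show ?thesis
    by (simp only: atom_holds_eq_atom_sat)
qed

lemma is_run: "is_run (aut \<phi>) t [] R rl"
  unfolding is_run_def
proof (intro conjI allI impI ballI)
  fix x assume "x \<in> R"
  obtain b \<psi> v where lbl_x: "lbl x = (b, \<psi>, v)"
    by (cases "lbl x") auto
  then have rl_x: "rl x = (state_of b \<psi>, v)"
    by (simp add: rl_def)
  have "\<psi> \<in> subformulas \<phi>" "in_dom t v" "sat t v \<psi> = b"
    using obligation_holds[OF \<open>x \<in> R\<close> lbl_x] by auto
  then show "fst (rl x) \<in> states (aut \<phi>)" "in_dom t (snd (rl x))"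
    using rl_x by auto
  show "eval_pbf (atom_holds t R rl x)
      (delta (aut \<phi>) (fst (rl x)) (lab t (snd (rl x))) (snd (rl x) = []))"
    using eval_tr_successor_copy[OF \<open>sat t v \<psi> = b\<close>] atom_holds_successor_copy[OF \<open>x \<in> R\<close>]
      lbl_x rl_x by simp
qed (use root_in_tree parent_in_tree lbl_root in \<open>auto simp: rl_def\<close>)

lemma accepting: "accepting (aut \<phi>) R rl"
  unfolding accepting_def
proof (intro allI impI)
  fix p assume p: "p 0 = [] \<and> (\<forall>n. p (Suc n) \<in> rchildren R (p n))"
  have p_child: "p (Suc n) \<in> R \<and> (\<exists>i. p (Suc n) = i # p n)" for n
    using p by (auto simp: rchildren_def)
  have "lbl (p (Suc n)) \<in> successors t (lbl (p n))" for n
    using p_child[of n] lbl_child by metis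
  then have "\<exists>\<^sub>\<infinity>n. loop_type (fst (lbl (p n))) (fst (snd (lbl (p n)))) = Universal"
    by (rule successor_chain_universal)
  then show "\<exists>\<^sub>\<infinity>n. fst (rl (p n)) \<in> acc (aut \<phi>)"
  proof (rule INFM_mono)
    fix n
    obtain b \<psi> v where lbl_n: "lbl (p n) = (b, \<psi>, v)"
      by (cases "lbl (p n)") auto
    have "p n \<in> R"
      using p p_child root_in_tree by (cases n) auto
    then show "loop_type (fst (lbl (p n))) (fst (snd (lbl (p n)))) = Universal \<Longrightarrow>
        fst (rl (p n)) \<in> acc (aut \<phi>)"
      using obligation_holds[OF _ lbl_n] lbl_n by (auto simp: rl_def loop_type_Universal_iff)
  qed
qed

end

lemma accepting_run_if_sat:
  fixes \<phi> :: "'ap::countable pctl"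
  assumes "sat t [] \<phi>"
  shows "\<exists>R rl. is_run (aut \<phi>) t [] R rl \<and> accepting (aut \<phi>) R rl"
proof -
  obtain R and lbl :: "nat list \<Rightarrow> bool \<times> 'ap pctl \<times> nat list"
    where "[] \<in> R" "\<And>i x. i # x \<in> R \<Longrightarrow> x \<in> R" "lbl [] = (True, \<phi>, [])"
      "\<And>x. x \<in> R \<Longrightarrow> lbl ` rchildren R x = successors t (lbl x)"
    by (fact tree_unfolding_exists[where succ = "successors t" and r = "(True, \<phi>, [])",
          OF finite_successors])
  then interpret obligation_tree \<phi> t R lbl
    using assms by unfold_locales
  show ?thesis
    using is_run accepting by blast
qed

theorem theorem5p2:
  fixes \<phi> :: "('ap::finite) pctl"
  shows "\<exists>A :: 'ap hta. hta_wf A \<and> linear_hesitant A \<and> hta_lang A = ctl_lang \<phi>"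
proof (intro exI[of _ "aut \<phi>"] conjI)
  show "hta_wf (aut \<phi>)"
    by (rule hta_wf_aut)
  show "linear_hesitant (aut \<phi>)"
    by (rule linear_hesitant_aut)
  show "hta_lang (aut \<phi>) = ctl_lang \<phi>"
    unfolding hta_lang_def ctl_lang_def
    using sat_if_accepting_run accepting_run_if_sat by blast
qed

end
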